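(* Let $P$ be a connected shrub on a finite set $I$ with at least two elements. Let $S$ be the set of vertices of height $1$ that cover every vertex of height $0$. In the graph obtained from the underlying graph of $P$ by removing all edges between elements of $S$ and vertices of height $0$, no vertex of $S$ lies in the same connected component as a vertex of height $0$.
   Context: A shrub $P$ on a finite set $I$ is a set $E$ of edges (unordered pairs $\{i,j\}$ of distinct elements of $I$) together with a height function $h_P:I\to\mathbb{N}$. Say that $j$ covers $i$ if $\{i,j\}\in E$ and $h_P(j)=h_P(i)+1$. The axioms are: (1) if $\{i,j\}\in E$ then $h_P(i)=h_P(j)\pm 1$; (2) if $h_P(j)>0$ then there is an edge $\{i,j\}$ with $h_P(i)=h_P(j)-1$; (3) there are no four distinct vertices $a,b,c,d$ such that $a$ covers $b$ and $c$, $c$ covers $d$, and $\{b,d\}\notin E$; (4) there are no five distinct vertices $a,b,c,d,e$ such that $a$ covers $c$ and $d$, $b$ covers $d$ and $e$, $\{a,e\}\notin E$ and $\{b,c\}\notin E$. A shrub is connected if its underlying graph $(I,E)$ is connected. *)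

theory Defs
  imports Main
begin

text \<open>Edges are unordered pairs of distinct elements of I, represented as 2-element sets.\<close>

definition covers :: "'a set set \<Rightarrow> ('a \<Rightarrow> nat) \<Rightarrow> 'a \<Rightarrow> 'a \<Rightarrow> bool" where
  "covers E h j i \<longleftrightarrow> {i, j} \<in> E \<and> h j = h i + 1"

definition shrub :: "'a set \<Rightarrow> 'a set set \<Rightarrow> ('a \<Rightarrow> nat) \<Rightarrow> bool" where
  "shrub I E h \<longleftrightarrow>
     finite I \<and>
     (\<forall>e\<in>E. \<exists>i j. e = {i, j} \<and> i \<noteq> j \<and> i \<in> I \<and> j \<in> I) \<and>
     (\<forall>i\<in>I. \<forall>j\<in>I. {i, j} \<in> E \<longrightarrow> h i = h j + 1 \<or> h j = h i + 1) \<and>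
     (\<forall>j\<in>I. h j > 0 \<longrightarrow> (\<exists>i\<in>I. {i, j} \<in> E \<and> h i + 1 = h j)) \<and>
     \<not> (\<exists>a\<in>I. \<exists>b\<in>I. \<exists>c\<in>I. \<exists>d\<in>I. distinct [a, b, c, d] \<and>
          covers E h a b \<and> covers E h a c \<and> covers E h c d \<and> {b, d} \<notin> E) \<and>
     \<not> (\<exists>a\<in>I. \<exists>b\<in>I. \<exists>c\<in>I. \<exists>d\<in>I. \<exists>e\<in>I. distinct [a, b, c, d, e] \<and>
          covers E h a c \<and> covers E h a d \<and> covers E h b d \<and> covers E h b e \<and>
          {a, e} \<notin> E \<and> {b, c} \<notin> E)"

definition adj :: "'a set \<Rightarrow> 'a set set \<Rightarrow> ('a \<times> 'a) set" where
  "adj I E = {(x, y). x \<in> I \<and> y \<in> I \<and> x \<noteq> y \<and> {x, y} \<in> E}"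

definition connected_graph :: "'a set \<Rightarrow> 'a set set \<Rightarrow> bool" where
  "connected_graph I E \<longleftrightarrow> (\<forall>x\<in>I. \<forall>y\<in>I. (x, y) \<in> (adj I E)\<^sup>*)"

end

theory Submission
  imports Defs
begin

text \<open>
  Call a vertex \<open>u\<close> of positive height good if every vertex of height 1 reachable from \<open>u\<close>
  by descending cover steps (the set \<open>level_one_below E h u\<close>) lies in \<open>S\<close>. By axiom (3),
  two vertices covered by a common vertex share their lower covers, and \<open>S\<close> is closed under
  this sibling relation; an induction on height then shows that goodness passes from a vertex
  to its siblings. Hence goodness propagates along every edge of the reduced graph: going down
  from a good vertex of height at least 2 stays good, going up from a good vertex reaches a
  vertex whose lower covers are all siblings of the good one, and going down from height 1 is
  impossible, because a good vertex of height 1 lies in \<open>S\<close> and its edges to height 0 have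
  been removed. Every vertex in the component of an element of \<open>S\<close> is therefore good, in
  particular of positive height.
\<close>

lemma
  assumes "shrub I E h"
  shows shrub_edges_in: "\<forall>e\<in>E. \<exists>i j. e = {i, j} \<and> i \<noteq> j \<and> i \<in> I \<and> j \<in> I"
    and shrub_edge_heights: "\<forall>i\<in>I. \<forall>j\<in>I. {i, j} \<in> E \<longrightarrow> h i = h j + 1 \<or> h j = h i + 1"
    and shrub_lower_neighbour: "\<forall>j\<in>I. h j > 0 \<longrightarrow> (\<exists>i\<in>I. {i, j} \<in> E \<and> h i + 1 = h j)"
    and shrub_no_open_square: "\<not> (\<exists>a\<in>I. \<exists>b\<in>I. \<exists>c\<in>I. \<exists>d\<in>I. distinct [a, b, c, d] \<and>
          covers E h a b \<and> covers E h a c \<and> covers E h c d \<and> {b, d} \<notin> E)"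
proof -
  note axioms = assms[unfolded shrub_def]
  show "\<forall>e\<in>E. \<exists>i j. e = {i, j} \<and> i \<noteq> j \<and> i \<in> I \<and> j \<in> I"
    using axioms by (elim conjE)
  show "\<forall>i\<in>I. \<forall>j\<in>I. {i, j} \<in> E \<longrightarrow> h i = h j + 1 \<or> h j = h i + 1"
    using axioms by (elim conjE)
  show "\<forall>j\<in>I. h j > 0 \<longrightarrow> (\<exists>i\<in>I. {i, j} \<in> E \<and> h i + 1 = h j)"
    using axioms by (elim conjE)
  show "\<not> (\<exists>a\<in>I. \<exists>b\<in>I. \<exists>c\<in>I. \<exists>d\<in>I. distinct [a, b, c, d] \<and>
          covers E h a b \<and> covers E h a c \<and> covers E h c d \<and> {b, d} \<notin> E)"
    using axioms by (elim conjE)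
qed

lemma shrub_lower_cover:
  assumes "shrub I E h" "j \<in> I" "h j > 0"
  obtains i where "covers E h j i"
proof -
  obtain i where "{i, j} \<in> E" "h i + 1 = h j"
    using shrub_lower_neighbour[OF assms(1)] assms(2,3) by blast
  then have "covers E h j i" by (simp add: covers_def insert_commute)
  then show thesis by (rule that)
qed

lemma shrub_covers_in:
  assumes "shrub I E h" "covers E h a b"
  shows "a \<in> I" "b \<in> I"
proof -
  have "{b, a} \<in> E" using assms(2) by (simp add: covers_def)
  then obtain i j where "{b, a} = {i, j}" "i \<in> I" "j \<in> I"
    using shrub_edges_in[OF assms(1)] by blast
  then show "a \<in> I" "b \<in> I" by (auto simp: doubleton_eq_iff)
qed

lemma shrub_covers_common_lower:
  assumes sh: "shrub I E h"
    and ab: "covers E h a b" and ac: "covers E h a c" and cd: "covers E h c d"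
  shows "covers E h b d"
proof (cases "b = c")
  case True
  with cd show ?thesis by simp
next
  case False
  have I: "a \<in> I" "b \<in> I" "c \<in> I" "d \<in> I"
    using shrub_covers_in[OF sh] ab ac cd by blast+
  have "distinct [a, b, c, d]"
    using False ab ac cd by (auto simp: covers_def)
  then have "{b, d} \<in> E"
    using shrub_no_open_square[OF sh] I ab ac cd by blast
  with ab ac cd show ?thesis by (simp add: covers_def insert_commute)
qed

definition level_one_below :: "'a set set \<Rightarrow> ('a \<Rightarrow> nat) \<Rightarrow> 'a \<Rightarrow> 'a set" where
  "level_one_below E h u = {w. (u, w) \<in> {(x, y). covers E h x y}\<^sup>* \<and> h w = 1}"

lemma descending_height:
  assumes "(u, w) \<in> {(x, y). covers E h x y}\<^sup>*"
  shows "h w \<le> h u" "h w = h u \<Longrightarrow> w = u"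
  using assms by (induction rule: rtrancl_induct) (auto simp: covers_def)

lemma level_one_below_of_level_one:
  assumes "h u = 1"
  shows "level_one_below E h u = {u}"
proof -
  have "w = u" if "(u, w) \<in> {(x, y). covers E h x y}\<^sup>*" "h w = 1" for w
    using descending_height(2)[OF that(1)] assms that(2) by simp
  with assms show ?thesis unfolding level_one_below_def by blast
qed

lemma level_one_below_covers_subset:
  "covers E h u x \<Longrightarrow> level_one_below E h x \<subseteq> level_one_below E h u"
  unfolding level_one_below_def by (auto intro: converse_rtrancl_into_rtrancl)

lemma level_one_below_unfold:
  assumes "h u \<ge> 2"
  shows "level_one_below E h u = (\<Union>x\<in>{x. covers E h u x}. level_one_below E h x)"
proof
  show "level_one_below E h u \<subseteq> (\<Union>x\<in>{x. covers E h u x}. level_one_below E h x)"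
  proof
    fix w assume w: "w \<in> level_one_below E h u"
    then have uw: "(u, w) \<in> {(x, y). covers E h x y}\<^sup>*" "h w = 1"
      unfolding level_one_below_def by auto
    with assms have "w \<noteq> u" by auto
    with uw(1) obtain x where "covers E h u x" "(x, w) \<in> {(x, y). covers E h x y}\<^sup>*"
      by (metis (no_types, lifting) case_prodD converse_rtranclE mem_Collect_eq)
    with uw(2) show "w \<in> (\<Union>x\<in>{x. covers E h u x}. level_one_below E h x)"
      unfolding level_one_below_def by blast
  qed
  show "(\<Union>x\<in>{x. covers E h u x}. level_one_below E h x) \<subseteq> level_one_below E h u"
    by (intro UN_least) (simp add: level_one_below_covers_subset)
qed

definition sibling_closed :: "'a set set \<Rightarrow> ('a \<Rightarrow> nat) \<Rightarrow> 'a set \<Rightarrow> bool" where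
  "sibling_closed E h S \<longleftrightarrow> (\<forall>x u w. covers E h x u \<longrightarrow> covers E h x w \<longrightarrow> u \<in> S \<longrightarrow> w \<in> S)"

lemma level_one_below_sibling:
  assumes sh: "shrub I E h"
    and S_sibling_closed: "sibling_closed E h S"
    and xu: "covers E h x u" and xw: "covers E h x w"
    and pos: "h u \<ge> 1" and good: "level_one_below E h u \<subseteq> S"
  shows "level_one_below E h w \<subseteq> S"
  using xu xw pos good
proof (induction "h u" arbitrary: x u w rule: less_induct)
  case less
  have hw: "h w = h u" using less.prems by (simp add: covers_def)
  show ?case
  proof (cases "h u = 1")
    case True
    then have "u \<in> S"
      using less.prems(4) by (simp add: level_one_below_of_level_one)
    then have "w \<in> S"
      using S_sibling_closed less.prems(1,2) unfolding sibling_closed_def by blast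
    with True hw show ?thesis by (simp add: level_one_below_of_level_one)
  next
    case False
    obtain d where ud: "covers E h u d"
      using shrub_lower_cover[OF sh shrub_covers_in(2)[OF sh less.prems(1)]] less.prems(3)
      by auto
    have wd: "covers E h w d"
      using shrub_covers_common_lower[OF sh less.prems(2,1) ud] .
    have d_good: "level_one_below E h d \<subseteq> S"
      using level_one_below_covers_subset[OF ud] less.prems(4) by blast
    have "h d < h u" "h d \<ge> 1" using ud False less.prems(3) by (auto simp: covers_def)
    then have "level_one_below E h w' \<subseteq> S" if "covers E h w w'" for w'
      using less.hyps[OF _ wd that _ d_good] by blast
    moreover have "h w \<ge> 2" using False less.prems(3) hw by simp
    ultimately show ?thesis by (auto simp: level_one_below_unfold[of h w])
  qed
qed

lemma ground_covering_sibling_closed: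
  assumes sh: "shrub I E h"
  shows "sibling_closed E h {s \<in> I. h s = 1 \<and> (\<forall>v\<in>I. h v = 0 \<longrightarrow> covers E h s v)}"
  unfolding sibling_closed_def
proof (intro allI impI)
  fix x u w
  assume xu: "covers E h x u" and xw: "covers E h x w"
    and u: "u \<in> {s \<in> I. h s = 1 \<and> (\<forall>v\<in>I. h v = 0 \<longrightarrow> covers E h s v)}"
  have "w \<in> I" using shrub_covers_in(2)[OF sh xw] .
  moreover have "h w = 1" using xu xw u by (simp add: covers_def)
  moreover have "\<forall>v\<in>I. h v = 0 \<longrightarrow> covers E h w v"
    using u shrub_covers_common_lower[OF sh xw xu] by blast
  ultimately show "w \<in> {s \<in> I. h s = 1 \<and> (\<forall>v\<in>I. h v = 0 \<longrightarrow> covers E h s v)}"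
    by blast
qed

lemma reduced_graph_reachable_level_one_below:
  assumes sh: "shrub I E h"
    and S_sibling_closed: "sibling_closed E h S"
    and s: "s \<in> S" "h s = 1"
    and E': "E' = E - {{t, v} | t v. t \<in> S \<and> v \<in> I \<and> h v = 0}"
    and su: "(s, u) \<in> (adj I E')\<^sup>*"
  shows "h u \<ge> 1 \<and> level_one_below E h u \<subseteq> S"
  using su
proof (induction rule: rtrancl_induct)
  case base
  with s show ?case by (simp add: level_one_below_of_level_one)
next
  case (step u y)
  then have uy: "u \<in> I" "y \<in> I" "{u, y} \<in> E'" by (auto simp: adj_def)
  have "{u, y} \<in> E" using uy(3) E' by blast
  moreover have "h u = h y + 1 \<or> h y = h u + 1"
    using shrub_edge_heights[OF sh] uy(1,2) calculation by blast
  ultimately consider "covers E h y u" | "covers E h u y"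
    by (auto simp: covers_def insert_commute)
  then show ?case
  proof cases
    case 1
    then have "level_one_below E h w \<subseteq> S" if "covers E h y w" for w
      using level_one_below_sibling[OF sh S_sibling_closed 1 that] step.IH by blast
    moreover have "h y \<ge> 2" using 1 step.IH by (simp add: covers_def)
    ultimately show ?thesis by (auto simp: level_one_below_unfold)
  next
    case 2
    have "h u \<noteq> 1"
    proof
      assume "h u = 1"
      then have "u \<in> S" "h y = 0"
        using step.IH 2 by (auto simp: level_one_below_of_level_one covers_def)
      with uy E' show False by blast
    qed
    with 2 step.IH level_one_below_covers_subset[OF 2] show ?thesis
      by (auto simp: covers_def)
  qed
qed

theorem mainTheorem2:
  fixes I :: "'a set" and E :: "'a set set" and h :: "'a \<Rightarrow> nat"
  assumes "shrub I E h"
    and "connected_graph I E"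
    and "card I \<ge> 2"
  defines "S \<equiv> {s \<in> I. h s = 1 \<and> (\<forall>v\<in>I. h v = 0 \<longrightarrow> covers E h s v)}"
  defines "E' \<equiv> E - {{s, v} | s v. s \<in> S \<and> v \<in> I \<and> h v = 0}"
  shows "\<forall>s\<in>S. \<forall>v\<in>I. h v = 0 \<longrightarrow> (s, v) \<notin> (adj I E')\<^sup>*"
proof (intro ballI impI notI)
  fix s v assume s: "s \<in> S" and "h v = 0" and sv: "(s, v) \<in> (adj I E')\<^sup>*"
  have "sibling_closed E h S"
    unfolding S_def using assms(1) by (rule ground_covering_sibling_closed)
  have "h s = 1" using s unfolding S_def by blast
  with s have "h v \<ge> 1"
    using reduced_graph_reachable_level_one_below[OF assms(1) \<open>sibling_closed E h S\<close> _ _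
        meta_eq_to_obj_eq[OF E'_def] sv]
    by blast
  with \<open>h v = 0\<close> show False by simp
qed

end
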